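(* Let $\Omega=(0,L)^2$ with periodic boundary conditions, $M$ a positive integer, $h=L/M$, and let $\Lambda_h$ be the standard five-point central-difference matrix of the Laplacian on the periodic grid $\{(ih,jh):1\le i,j\le M\}$ (diagonal entries $-4/h^2$, off-diagonal entries $1/h^2$ for the four neighbours, $0$ otherwise); let $\varepsilon>0$ and $I$ the identity matrix. Let $\tau_k>0$ be time steps, $r_k=\tau_k/\tau_{k-1}$ for $2\le k\le N$, $r_1:=0$. Define $b_0^{(1)}=1/\tau_1$, $b_1^{(1)}=0$ and for $n\ge2$ $$b_0^{(n)}=\frac{1+2r_n}{\tau_n(1+r_n)},\qquad b_1^{(n)}=-\frac{r_n^2}{\tau_n(1+r_n)}.$$ Let $\eta$ be a real number with $\frac{r_k^2}{1+2r_k}\le\eta<1$ for all $2\le k\le N$, define $d_0^{(n)}=b_0^{(n)}$ and $d_j^{(n)}=\eta^{j-1}(b_0^{(n)}\eta+b_1^{(n)})$ for $1\le j\le n$, let $S_n$ ($n\ge1$) be real parameters, and set $$Q_j^{(n)}=\big(d_{j-1}^{(n)}-d_j^{(n)}-S_n\eta^j\big)I+\eta^j\varepsilon^2\Lambda_h,\qquad 1\le j\le n.$$ Assume $0<r_k<1+\sqrt2$ for $2\le k\le N$ and $$\tau_n\le\frac{(1+2r_n)\eta-r_n^2}{\eta^2(1+r_n)}\cdot\frac{1-\eta}{S_n+4\varepsilon^2h^{-2}}\quad\text{for } n\ge1.$$ Then $\|Q_j^{(n)}\|_\infty\le d_{j-1}^{(n)}-d_j^{(n)}-S_n\eta^j$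 for $1\le j\le n$, where $\|\cdot\|_\infty$ is the matrix norm induced by the vector maximum norm (maximum absolute row sum). *)

theory Defs
  imports Complex_Main
begin

text \<open>Periodic grid with M points per direction; grid point (i,j), 0 <= i,j < M,
  stands for (i+1)h,(j+1)h. Matrices on the grid are functions
  grid index => grid index => real.\<close>

definition grid :: "nat \<Rightarrow> (nat \<times> nat) set" where
  "grid M = {0..<M} \<times> {0..<M}"

type_synonym gmat = "nat \<times> nat \<Rightarrow> nat \<times> nat \<Rightarrow> real"

definition idm :: gmat where
  "idm p q = (if p = q then 1 else 0)"

definition lap :: "nat \<Rightarrow> real \<Rightarrow> gmat" where
  "lap M h p q =
     (let (i, j) = p in
       (if q = (i, j) then - 4 / h\<^sup>2 else 0)
     + (if q = ((i + 1) mod M, j) then 1 / h\<^sup>2 else 0)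
     + (if q = ((i + M - 1) mod M, j) then 1 / h\<^sup>2 else 0)
     + (if q = (i, (j + 1) mod M) then 1 / h\<^sup>2 else 0)
     + (if q = (i, (j + M - 1) mod M) then 1 / h\<^sup>2 else 0))"

definition inf_norm :: "nat \<Rightarrow> gmat \<Rightarrow> real" where
  "inf_norm M A = Max ((\<lambda>p. \<Sum>q\<in>grid M. \<bar>A p q\<bar>) ` grid M)"

definition step_ratio :: "(nat \<Rightarrow> real) \<Rightarrow> nat \<Rightarrow> real" where
  "step_ratio \<tau> k = (if k = 1 then 0 else \<tau> k / \<tau> (k - 1))"

definition b0 :: "(nat \<Rightarrow> real) \<Rightarrow> nat \<Rightarrow> real" where
  "b0 \<tau> n = (if n = 1 then 1 / \<tau> 1
     else (1 + 2 * step_ratio \<tau> n) / (\<tau> n * (1 + step_ratio \<tau> n)))"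

definition b1 :: "(nat \<Rightarrow> real) \<Rightarrow> nat \<Rightarrow> real" where
  "b1 \<tau> n = (if n = 1 then 0
     else - ((step_ratio \<tau> n)\<^sup>2) / (\<tau> n * (1 + step_ratio \<tau> n)))"

definition dcoef :: "(nat \<Rightarrow> real) \<Rightarrow> real \<Rightarrow> nat \<Rightarrow> nat \<Rightarrow> real" where
  "dcoef \<tau> \<eta> n j = (if j = 0 then b0 \<tau> n
     else \<eta> ^ (j - 1) * (b0 \<tau> n * \<eta> + b1 \<tau> n))"

definition Qmat :: "nat \<Rightarrow> real \<Rightarrow> real \<Rightarrow> (nat \<Rightarrow> real) \<Rightarrow> real \<Rightarrow> (nat \<Rightarrow> real)
    \<Rightarrow> nat \<Rightarrow> nat \<Rightarrow> gmat" where
  "Qmat M h \<epsilon> \<tau> \<eta> S n j p q =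
     (dcoef \<tau> \<eta> n (j - 1) - dcoef \<tau> \<eta> n j - S n * \<eta> ^ j) * idm p q
     + \<eta> ^ j * \<epsilon>\<^sup>2 * lap M h p q"

end

theory Submission
  imports Defs
begin

text \<open>Write \<open>c\<^sub>j = d\<^sub>j\<^sub>-\<^sub>1 - d\<^sub>j - S \<eta>\<^sup>j\<close>. The matrix \<open>c\<^sub>j I + t \<Lambda>\<^sub>h\<close> with \<open>t \<ge> 0\<close> has
  row sums \<open>c\<^sub>j\<close>, because the rows of \<open>\<Lambda>\<^sub>h\<close> sum to zero; its off-diagonal entries are
  nonnegative, and so is its diagonal \<open>c\<^sub>j - 4t/h\<^sup>2\<close> as soon as \<open>c\<^sub>j \<ge> 4t/h\<^sup>2\<close>. Then every
  absolute row sum equals \<open>c\<^sub>j\<close>. With \<open>t = \<eta>\<^sup>j \<epsilon>\<^sup>2\<close> the condition \<open>c\<^sub>j \<ge> \<eta>\<^sup>j \<cdot> 4\<epsilon>\<^sup>2/h\<^sup>2\<close> reduces,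
  since \<open>d\<^sub>j\<^sub>-\<^sub>1 - d\<^sub>j = \<eta>\<^sup>j\<^sup>-\<^sup>2 (b\<^sub>0 \<eta> + b\<^sub>1)(1 - \<eta>)\<close> for \<open>j \<ge> 2\<close> and \<open>b\<^sub>1 \<le> 0\<close>, to the single
  inequality \<open>\<eta>\<^sup>2 (S + 4\<epsilon>\<^sup>2/h\<^sup>2) \<le> (b\<^sub>0 \<eta> + b\<^sub>1)(1 - \<eta>)\<close>, which is the time-step restriction.\<close>

lemma finite_grid [simp]: "finite (grid M)"
  by (simp add: grid_def)

lemma grid_nonempty: "M > 0 \<Longrightarrow> grid M \<noteq> {}"
  by (auto simp: grid_def)

lemma inf_norm_le:
  assumes "M > 0" and "\<And>p. p \<in> grid M \<Longrightarrow> (\<Sum>q\<in>grid M. \<bar>A p q\<bar>) \<le> c"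
  shows "inf_norm M A \<le> c"
  unfolding inf_norm_def using assms grid_nonempty by (subst Max_le_iff) auto

lemma sum_idm_row:
  assumes "p \<in> grid M"
  shows "(\<Sum>q\<in>grid M. idm p q) = 1"
  using assms by (simp add: idm_def eq_commute[of p])

lemma lap_ge_diagonal_part: "(if q = p then - 4 / h\<^sup>2 else 0) \<le> lap M h p q"
  unfolding lap_def by (cases p) (auto simp: Let_def)

lemma sum_lap_row:
  assumes "p \<in> grid M"
  shows "(\<Sum>q\<in>grid M. lap M h p q) = 0"
proof -
  obtain i j where p: "p = (i, j)" and "i < M" "j < M"
    using assms by (cases p) (auto simp: grid_def)
  then have neighbours: "((i + 1) mod M, j) \<in> grid M" "((i + M - 1) mod M, j) \<in> grid M"
      "(i, (j + 1) mod M) \<in> grid M" "(i, (j + M - 1) mod M) \<in> grid M"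
    by (auto simp: grid_def)
  have "(\<Sum>q\<in>grid M. lap M h p q) =
     (\<Sum>q\<in>grid M. if q = (i, j) then - 4 / h\<^sup>2 else 0)
     + (\<Sum>q\<in>grid M. if q = ((i + 1) mod M, j) then 1 / h\<^sup>2 else 0)
     + (\<Sum>q\<in>grid M. if q = ((i + M - 1) mod M, j) then 1 / h\<^sup>2 else 0)
     + (\<Sum>q\<in>grid M. if q = (i, (j + 1) mod M) then 1 / h\<^sup>2 else 0)
     + (\<Sum>q\<in>grid M. if q = (i, (j + M - 1) mod M) then 1 / h\<^sup>2 else 0)"
    unfolding lap_def p by (simp add: sum.distrib)
  also have "\<dots> = 0"
    using assms neighbours p by simp
  finally show ?thesis .
qed

lemma inf_norm_diag_plus_lap_le:
  assumes "M > 0" and "t \<ge> 0" and "t * (4 / h\<^sup>2) \<le> c"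
  shows "inf_norm M (\<lambda>p q. c * idm p q + t * lap M h p q) \<le> c"
proof (rule inf_norm_le)
  fix p assume p: "p \<in> grid M"
  have nonneg: "0 \<le> c * idm p q + t * lap M h p q" for q
  proof -
    have "t * (if q = p then - 4 / h\<^sup>2 else 0) \<le> t * lap M h p q"
      using lap_ge_diagonal_part \<open>t \<ge> 0\<close> by (rule mult_left_mono)
    moreover have "0 \<le> c * idm p q + t * (if q = p then - 4 / h\<^sup>2 else 0)"
      using assms(2,3) by (auto simp: idm_def)
    ultimately show ?thesis by linarith
  qed
  have "(\<Sum>q\<in>grid M. \<bar>c * idm p q + t * lap M h p q\<bar>)
      = c * (\<Sum>q\<in>grid M. idm p q) + t * (\<Sum>q\<in>grid M. lap M h p q)"
    using nonneg by (simp add: sum.distrib sum_distrib_left)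
  also have "\<dots> = c"
    using p by (simp add: sum_idm_row sum_lap_row)
  finally show "(\<Sum>q\<in>grid M. \<bar>c * idm p q + t * lap M h p q\<bar>) \<le> c" by simp
qed (fact \<open>M > 0\<close>)

text \<open>Since \<open>r\<^sub>1 = 0\<close>, the general formulas also cover \<open>n = 1\<close>.\<close>

lemma b0_eq: "b0 \<tau> n = (1 + 2 * step_ratio \<tau> n) / (\<tau> n * (1 + step_ratio \<tau> n))"
  by (simp add: b0_def step_ratio_def)

lemma b1_eq: "b1 \<tau> n = - (step_ratio \<tau> n)\<^sup>2 / (\<tau> n * (1 + step_ratio \<tau> n))"
  by (simp add: b1_def step_ratio_def)

lemma b1_nonpos: "\<tau> n > 0 \<Longrightarrow> step_ratio \<tau> n \<ge> 0 \<Longrightarrow> b1 \<tau> n \<le> 0"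
  by (simp add: b1_eq divide_nonpos_pos)

lemma b0_mult_plus_b1:
  "b0 \<tau> n * \<eta> + b1 \<tau> n
     = ((1 + 2 * step_ratio \<tau> n) * \<eta> - (step_ratio \<tau> n)\<^sup>2) / (\<tau> n * (1 + step_ratio \<tau> n))"
  by (simp add: b0_eq b1_eq diff_divide_distrib)

lemma time_step_bound_imp_eta_sq_le:
  fixes t q A \<eta> P :: real
  assumes "t > 0" and "q > 0" and "A \<ge> 0" and "0 < \<eta>" and "\<eta> \<le> 1"
    and "t \<le> A / (\<eta>\<^sup>2 * q) * ((1 - \<eta>) / P)"
  shows "\<eta>\<^sup>2 * P \<le> A / (t * q) * (1 - \<eta>)"
proof (cases "P > 0")
  case True
  define a where "a = A / q * (1 - \<eta>)"
  have "0 < \<eta>\<^sup>2 * P" using True \<open>0 < \<eta>\<close> by simp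
  have "t \<le> a / (\<eta>\<^sup>2 * P)"
    using assms(6) by (simp add: a_def ac_simps)
  then have "t * (\<eta>\<^sup>2 * P) \<le> a"
    using \<open>0 < \<eta>\<^sup>2 * P\<close> by (simp add: le_divide_eq)
  then have "\<eta>\<^sup>2 * P \<le> a / t"
    using \<open>t > 0\<close> by (simp add: le_divide_eq mult.commute)
  then show ?thesis
    by (simp add: a_def ac_simps)
next
  case False
  then have "\<eta>\<^sup>2 * P \<le> 0" by (simp add: mult_nonneg_nonpos)
  also have "0 \<le> A / (t * q) * (1 - \<eta>)"
    using assms(1-3,5) by simp
  finally show ?thesis .
qed

lemma dcoef_diff:
  assumes "2 \<le> j"
  shows "dcoef \<tau> \<eta> n (j - 1) - dcoef \<tau> \<eta> n j = \<eta> ^ (j - 2) * (b0 \<tau> n * \<eta> + b1 \<tau> n) * (1 - \<eta>)"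
proof -
  obtain m where j: "j = Suc (Suc m)"
    using assms by (metis add_2_eq_Suc le_Suc_ex)
  show ?thesis
    unfolding j by (simp add: dcoef_def right_diff_distrib)
qed

lemma dcoef_diff_ge:
  assumes "0 < \<eta>" and "b1 \<tau> n \<le> 0" and "1 \<le> j"
    and key: "\<eta>\<^sup>2 * P \<le> (b0 \<tau> n * \<eta> + b1 \<tau> n) * (1 - \<eta>)"
  shows "\<eta> ^ j * P \<le> dcoef \<tau> \<eta> n (j - 1) - dcoef \<tau> \<eta> n j"
proof (cases "j = 1")
  case True
  have "\<eta> * P \<le> (b0 \<tau> n * \<eta> + b1 \<tau> n) * (1 - \<eta>) / \<eta>"
    using divide_right_mono[OF key, of \<eta>] \<open>0 < \<eta>\<close> by (simp add: power2_eq_square)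
  also have "\<dots> = b0 \<tau> n * (1 - \<eta>) - b1 \<tau> n + b1 \<tau> n / \<eta>"
    using \<open>0 < \<eta>\<close> by (simp add: field_simps)
  also have "\<dots> \<le> b0 \<tau> n * (1 - \<eta>) - b1 \<tau> n"
    using \<open>b1 \<tau> n \<le> 0\<close> \<open>0 < \<eta>\<close> by (simp add: divide_nonpos_pos)
  finally show ?thesis
    using True by (simp add: dcoef_def algebra_simps)
next
  case False
  then have "2 \<le> j" using \<open>1 \<le> j\<close> by simp
  have "\<eta> ^ j * P = \<eta> ^ (j - 2) * (\<eta>\<^sup>2 * P)"
    using \<open>2 \<le> j\<close> by (metis le_add_diff_inverse2 mult.assoc power_add)
  also have "\<dots> \<le> \<eta> ^ (j - 2) * ((b0 \<tau> n * \<eta> + b1 \<tau> n) * (1 - \<eta>))"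
    using key \<open>0 < \<eta>\<close> by (simp add: mult_left_mono)
  finally show ?thesis
    using dcoef_diff[OF \<open>2 \<le> j\<close>] by (simp add: mult.assoc)
qed

theorem lemma4p1:
  fixes L \<epsilon> \<eta> :: real and M N :: nat and \<tau> S :: "nat \<Rightarrow> real"
  assumes "L > 0" and "M > 0" and "\<epsilon> > 0"
    and "\<eta> > 0"
    and tau_pos: "\<And>k. 1 \<le> k \<Longrightarrow> k \<le> N \<Longrightarrow> \<tau> k > 0"
    and eta_lower: "\<And>k. 2 \<le> k \<Longrightarrow> k \<le> N \<Longrightarrow>
           (step_ratio \<tau> k)\<^sup>2 / (1 + 2 * step_ratio \<tau> k) \<le> \<eta>"
    and "\<eta> < 1"
    and r_bounds: "\<And>k. 2 \<le> k \<Longrightarrow> k \<le> N \<Longrightarrow>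
           0 < step_ratio \<tau> k \<and> step_ratio \<tau> k < 1 + sqrt 2"
    and tau_bound: "\<And>n. 1 \<le> n \<Longrightarrow> n \<le> N \<Longrightarrow>
           \<tau> n \<le> ((1 + 2 * step_ratio \<tau> n) * \<eta> - (step_ratio \<tau> n)\<^sup>2)
                    / (\<eta>\<^sup>2 * (1 + step_ratio \<tau> n))
                  * ((1 - \<eta>) / (S n + 4 * \<epsilon>\<^sup>2 / (L / real M)\<^sup>2))"
    and "1 \<le> n" and "n \<le> N" and "1 \<le> j" and "j \<le> n"
  shows "inf_norm M (Qmat M (L / real M) \<epsilon> \<tau> \<eta> S n j)
           \<le> dcoef \<tau> \<eta> n (j - 1) - dcoef \<tau> \<eta> n j - S n * \<eta> ^ j"
proof -
  \<comment> \<open>The bound \<open>r < 1 + sqrt 2\<close> only makes \<open>r\<^sup>2/(1 + 2r) < 1\<close>, i.e. an admissible \<open>\<eta>\<close> possible.\<close>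
  define r where "r = step_ratio \<tau> n"
  define P where "P = S n + 4 * \<epsilon>\<^sup>2 / (L / real M)\<^sup>2"
  have "\<tau> n > 0" using tau_pos \<open>1 \<le> n\<close> \<open>n \<le> N\<close> .
  have "r \<ge> 0 \<and> r\<^sup>2 \<le> (1 + 2 * r) * \<eta>"
  proof (cases "n = 1")
    case True
    then show ?thesis using \<open>\<eta> > 0\<close> by (simp add: r_def step_ratio_def)
  next
    case False
    then have "0 < r" and "r\<^sup>2 / (1 + 2 * r) \<le> \<eta>"
      using r_bounds eta_lower \<open>1 \<le> n\<close> \<open>n \<le> N\<close> unfolding r_def by auto
    then show ?thesis by (simp add: divide_le_eq algebra_simps)
  qed
  then have "r \<ge> 0" and "(1 + 2 * r) * \<eta> - r\<^sup>2 \<ge> 0" by auto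
  have restriction: "\<eta>\<^sup>2 * P \<le> (b0 \<tau> n * \<eta> + b1 \<tau> n) * (1 - \<eta>)"
    unfolding b0_mult_plus_b1 r_def[symmetric]
  proof (rule time_step_bound_imp_eta_sq_le)
    show "\<tau> n \<le> ((1 + 2 * r) * \<eta> - r\<^sup>2) / (\<eta>\<^sup>2 * (1 + r)) * ((1 - \<eta>) / P)"
      using tau_bound \<open>1 \<le> n\<close> \<open>n \<le> N\<close> unfolding r_def P_def by blast
  qed (use \<open>\<tau> n > 0\<close> \<open>r \<ge> 0\<close> \<open>(1 + 2 * r) * \<eta> - r\<^sup>2 \<ge> 0\<close> \<open>\<eta> > 0\<close> \<open>\<eta> < 1\<close> in auto)
  have "b1 \<tau> n \<le> 0"
    using b1_nonpos \<open>\<tau> n > 0\<close> \<open>r \<ge> 0\<close> unfolding r_def by blast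
  from dcoef_diff_ge[OF \<open>\<eta> > 0\<close> this \<open>1 \<le> j\<close> restriction]
  have "\<eta> ^ j * \<epsilon>\<^sup>2 * (4 / (L / real M)\<^sup>2)
      \<le> dcoef \<tau> \<eta> n (j - 1) - dcoef \<tau> \<eta> n j - S n * \<eta> ^ j"
    unfolding P_def by (simp add: algebra_simps)
  then show ?thesis
    unfolding Qmat_def using inf_norm_diag_plus_lap_le \<open>M > 0\<close> \<open>\<eta> > 0\<close> by simp
qed

end
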